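(* Let $\mu$ be a positive finite Borel measure on $[0,1)$ such that $\sum_{n=0}^\infty\mu_n<\infty$, and let $1\le p<\infty$ satisfy $\left(\|(\mu_{n+k})_{n\ge0}\|_{\ell^p}\right)_{k\ge0}\in\ell^1$. Then the Hilbert-type operator $H_\mu:H^\infty\to A(\mathbb{T})$ is a well defined compact linear operator.
   Context: $\mu_n=\int_0^1t^n\,d\mu(t)$. $H^\infty$ is the Banach space of bounded holomorphic functions on the unit disc $\mathbb{D}$ with the sup norm. $A(\mathbb{T})$ is the Wiener algebra, identified with $\{f(z)=\sum_{n\ge0}a_nz^n:\sum_n|a_n|<\infty\}$ with norm $\sum_n|a_n|$. For $f(z)=\sum_na_nz^n$, $H_\mu(f)(z)=\sum_{k=0}^\infty\left(\sum_{n=0}^\infty\mu_{n+k}a_n\right)z^k$. *)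

theory Defs
  imports "HOL-Analysis.Analysis"
begin

definition moment :: "real measure \<Rightarrow> nat \<Rightarrow> real" where
  "moment M n = (\<integral>t. t ^ n \<partial>M)"

definition Hinf :: "(complex \<Rightarrow> complex) set" where
  "Hinf = {f. f holomorphic_on ball 0 1 \<and> (\<exists>C. \<forall>z\<in>ball 0 1. norm (f z) \<le> C)}"

definition Hinf_ball :: "(complex \<Rightarrow> complex) set" where
  "Hinf_ball = {f. f holomorphic_on ball 0 1 \<and> (\<forall>z\<in>ball 0 1. norm (f z) \<le> 1)}"

definition taylor_coeff :: "(complex \<Rightarrow> complex) \<Rightarrow> nat \<Rightarrow> complex" where
  "taylor_coeff f n = (deriv ^^ n) f 0 / of_nat (fact n)"

definition Hmu :: "real measure \<Rightarrow> (complex \<Rightarrow> complex) \<Rightarrow> nat \<Rightarrow> complex" where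
  "Hmu M f k = (\<Sum>n. complex_of_real (moment M (n + k)) * taylor_coeff f n)"

text \<open>Norm of the Wiener algebra A(T), on coefficient sequences.\<close>
definition wiener_norm :: "(nat \<Rightarrow> complex) \<Rightarrow> real" where
  "wiener_norm c = (\<Sum>k. norm (c k))"

end

theory Submission
  imports Defs "HOL-Complex_Analysis.Great_Picard"
begin

text \<open>
  Summing the moments under the integral gives H_mu(f)_k = \<integral> t^k f(t) d\<mu>(t). Since
  \<Sum>_k t^k = 1/(1-t) and \<integral> 1/(1-t) d\<mu> = \<Sum>_n \<mu>_n < \<infinity>, the Wiener norm of H_mu(f)
  is at most \<integral> |f(t)|/(1-t) d\<mu> \<le> ||f||_\<infinity> \<Sum>_n \<mu>_n. For compactness, Montel's
  theorem extracts from a bounded sequence in H^\<infinity> a subsequence converging pointwise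
  on the disc, and dominated convergence with dominating function 2/(1-t) shows that
  \<integral> |f_j(t) - g(t)|/(1-t) d\<mu> tends to 0.
\<close>

lemma sums_integral_AE:
  fixes g :: "nat \<Rightarrow> 'a \<Rightarrow> 'b::{banach, second_countable_topology}"
  assumes "\<And>n. integrable M (g n)"
    and "AE x in M. (\<lambda>n. g n x) sums s x"
    and "AE x in M. summable (\<lambda>n. norm (g n x))"
    and "summable (\<lambda>n. \<integral>x. norm (g n x) \<partial>M)"
    and "s \<in> borel_measurable M"
  shows "integrable M s" and "(\<lambda>n. \<integral>x. g n x \<partial>M) sums (\<integral>x. s x \<partial>M)"
proof -
  have sum_eq: "AE x in M. (\<Sum>n. g n x) = s x"
    using assms(2) by eventually_elim (rule sums_unique[symmetric])
  show "integrable M s"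
    using integrable_suminf[OF assms(1,3,4)] sum_eq assms(5) by (subst integrable_cong_AE) auto
  have "(\<integral>x. (\<Sum>n. g n x) \<partial>M) = (\<integral>x. s x \<partial>M)"
    using sum_eq integrable_suminf[OF assms(1,3,4)] assms(5) by (intro integral_cong_AE) auto
  then show "(\<lambda>n. \<integral>x. g n x \<partial>M) sums (\<integral>x. s x \<partial>M)"
    using sums_integral[OF assms(1,3,4)] by simp
qed

lemma summable_norm_bounded_coeff_power:
  fixes a :: "nat \<Rightarrow> 'a::real_normed_div_algebra"
  assumes "\<And>n. norm (a n) \<le> C" and "norm z < 1"
  shows "summable (\<lambda>n. norm (a n * z ^ n))"
proof (rule summable_comparison_test'[OF summable_mult[OF summable_geometric[of "norm z"]]])
  show "norm (norm (a n * z ^ n)) \<le> C * norm z ^ n" for n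
    using mult_right_mono[OF assms(1), of "norm z ^ n"] by (simp add: norm_mult norm_power)
qed (use assms(2) in simp)

lemma Hinf_ball_subset_Hinf: "Hinf_ball \<subseteq> Hinf"
  unfolding Hinf_def Hinf_ball_def by blast

lemma Hinf_linear_combination:
  assumes "f \<in> Hinf" and "g \<in> Hinf"
  shows "(\<lambda>z. a * f z + b * g z) \<in> Hinf"
proof -
  obtain C D where hol: "f holomorphic_on ball 0 1" "g holomorphic_on ball 0 1"
    and bound: "\<forall>z\<in>ball 0 1. norm (f z) \<le> C" "\<forall>z\<in>ball 0 1. norm (g z) \<le> D"
    using assms unfolding Hinf_def by blast
  have "\<forall>z\<in>ball 0 1. norm (a * f z + b * g z) \<le> norm a * C + norm b * D"
    using bound by (auto intro!: order_trans[OF norm_triangle_ineq] add_mono mult_left_mono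
        simp: norm_mult)
  with hol show ?thesis
    unfolding Hinf_def by (auto intro!: holomorphic_intros)
qed

lemma norm_taylor_coeff_le:
  assumes hol: "f holomorphic_on ball 0 1" and bound: "\<And>z. z \<in> ball 0 1 \<Longrightarrow> norm (f z) \<le> C"
  shows "norm (taylor_coeff f n) \<le> C"
proof -
  have "\<forall>\<^sub>F r in at_left 1. norm (taylor_coeff f n) \<le> C / r ^ n"
    using eventually_at_left_real[OF zero_less_one]
  proof (rule eventually_mono)
    fix r :: real assume r: "r \<in> {0<..<1}"
    have "norm ((deriv ^^ n) f 0) \<le> fact n * C / r ^ n"
    proof (rule Cauchy_inequality)
      show "f holomorphic_on ball 0 r"
        using hol by (rule holomorphic_on_subset) (use r in \<open>auto simp: subset_ball\<close>)
      show "continuous_on (cball 0 r) f"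
        using holomorphic_on_imp_continuous_on[OF hol] by (rule continuous_on_subset) (use r in auto)
    qed (use r bound in auto)
    then show "norm (taylor_coeff f n) \<le> C / r ^ n"
      by (simp add: taylor_coeff_def norm_divide field_simps)
  qed
  moreover have "((\<lambda>r. C / r ^ n) \<longlongrightarrow> C) (at_left (1::real))"
    by (auto intro!: tendsto_eq_intros)
  ultimately show ?thesis
    using tendsto_le[OF trivial_limit_at_left_real _ tendsto_const] by blast
qed

text \<open>The indicator makes the restriction Borel measurable on all of the real line,
  although f need not be continuous off the disc.\<close>
definition radial_restriction :: "(complex \<Rightarrow> complex) \<Rightarrow> real \<Rightarrow> complex" where
  "radial_restriction f t = indicator {0..<1} t *\<^sub>R f (complex_of_real t)"

lemma borel_measurable_radial_restriction:
  assumes "f holomorphic_on ball 0 1"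
  shows "radial_restriction f \<in> borel_measurable borel"
proof -
  have "continuous_on {0..<1} (\<lambda>t. f (complex_of_real t))"
    by (rule continuous_on_compose2[OF holomorphic_on_imp_continuous_on[OF assms]])
       (auto intro!: continuous_intros)
  then show ?thesis
    unfolding radial_restriction_def[abs_def] by (intro borel_measurable_continuous_on_indicator) auto
qed

lemma norm_radial_restriction_le:
  assumes "\<And>z. z \<in> ball 0 1 \<Longrightarrow> norm (f z) \<le> C"
  shows "norm (radial_restriction f t) \<le> C"
  using assms[of 0] assms[of "complex_of_real t"]
  by (auto simp: radial_restriction_def indicator_def dest: order_trans[OF norm_ge_zero])

lemma Hinf_ball_pointwise_convergent_subseq:
  assumes "\<And>j. F j \<in> Hinf_ball"
  obtains g r where "g \<in> Hinf_ball" and "strict_mono (r :: nat \<Rightarrow> nat)"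
    and "\<And>z. z \<in> ball 0 1 \<Longrightarrow> (\<lambda>j. F (r j) z) \<longlonglongrightarrow> g z"
proof -
  obtain g r where g: "g holomorphic_on ball 0 1" and r: "strict_mono (r :: nat \<Rightarrow> nat)"
    and lim: "\<And>z. z \<in> ball 0 1 \<Longrightarrow> (\<lambda>j. F (r j) z) \<longlonglongrightarrow> g z"
  proof (rule Montel[of "ball 0 1" Hinf_ball F])
    show "\<exists>B. \<forall>h\<in>Hinf_ball. \<forall>z\<in>K. norm (h z) \<le> B" if "K \<subseteq> ball 0 1" for K
      using that by (intro exI[of _ 1]) (auto simp: Hinf_ball_def)
  qed (use assms in \<open>auto simp: Hinf_ball_def\<close>)
  have "norm (g z) \<le> 1" if "z \<in> ball 0 1" for z
  proof (rule Lim_norm_ubound[OF _ lim[OF that]])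
    show "\<forall>\<^sub>F j in sequentially. norm (F (r j) z) \<le> 1"
      using assms that by (intro always_eventually) (simp add: Hinf_ball_def)
  qed simp
  with g have "g \<in> Hinf_ball"
    by (simp add: Hinf_ball_def)
  with r lim show ?thesis
    using that by blast
qed

locale unit_interval_measure = finite_measure M for M :: "real measure" +
  assumes sets_eq_borel: "sets M = sets borel"
    and null_outside_unit_interval: "emeasure M (UNIV - {0..<1}) = 0"
    and summable_moment: "summable (moment M)"
begin

lemma borel_measurable_M_iff: "f \<in> borel_measurable M \<longleftrightarrow> f \<in> borel_measurable borel"
  by (simp add: measurable_cong_sets[OF sets_eq_borel refl])

lemma borel_measurable_ident_M [measurable]: "(\<lambda>t. t) \<in> borel_measurable M"
  by (simp add: borel_measurable_M_iff)

lemma AE_unit_interval: "AE t in M. 0 \<le> t \<and> t < 1"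
proof (rule AE_I')
  show "UNIV - {0..<1} \<in> null_sets M"
    using null_outside_unit_interval sets_eq_borel by (simp add: null_sets_def)
qed (auto simp: borel_measurable_M_iff)

lemma integrable_power: "integrable M (\<lambda>t. t ^ n)"
proof (rule integrable_const_bound[where B = 1])
  show "AE t in M. norm (t ^ n) \<le> 1"
    using AE_unit_interval by eventually_elim (simp add: power_le_one power_abs)
qed measurable

lemma moment_nonneg: "0 \<le> moment M n"
  unfolding moment_def using AE_unit_interval by (intro integral_nonneg_AE) auto

lemma power_integral_sums:
  fixes h :: "real \<Rightarrow> real"
  assumes h_meas [measurable]: "h \<in> borel_measurable M"
    and h_bound: "AE t in M. 0 \<le> h t \<and> h t \<le> B"
  shows "integrable M (\<lambda>t. h t / (1 - t))"
    and "(\<lambda>k. \<integral>t. t ^ k * h t \<partial>M) sums (\<integral>t. h t / (1 - t) \<partial>M)"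
proof -
  have term_bound: "AE t in M. 0 \<le> t ^ k * h t \<and> t ^ k * h t \<le> B * t ^ k" for k
    using AE_unit_interval h_bound by eventually_elim (auto simp: mult.commute intro!: mult_right_mono)
  have term_int: "integrable M (\<lambda>t. t ^ k * h t)" for k
  proof (rule Bochner_Integration.integrable_bound[OF integrable_mult_right[OF integrable_power, of B k]])
    show "AE t in M. norm (t ^ k * h t) \<le> norm (B * t ^ k)"
      using term_bound[of k] by eventually_elim simp
  qed measurable
  have "(\<integral>t. norm (t ^ k * h t) \<partial>M) \<le> B * moment M k" for k
  proof -
    have "(\<integral>t. norm (t ^ k * h t) \<partial>M) \<le> (\<integral>t. B * t ^ k \<partial>M)"
    proof (rule integral_mono_AE)
      show "integrable M (\<lambda>t. norm (t ^ k * h t))"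
        using term_int by (rule integrable_norm)
      show "AE t in M. norm (t ^ k * h t) \<le> B * t ^ k"
        using term_bound[of k] by eventually_elim simp
    qed (simp add: integrable_power)
    then show ?thesis
      by (simp add: moment_def)
  qed
  then have summable_int: "summable (\<lambda>k. \<integral>t. norm (t ^ k * h t) \<partial>M)"
    by (intro summable_comparison_test'[OF summable_mult[OF summable_moment]]) simp
  have sums_pointwise: "AE t in M. (\<lambda>k. t ^ k * h t) sums (h t / (1 - t))"
    using AE_unit_interval
  proof eventually_elim
    case (elim t)
    then have "(\<lambda>k. t ^ k * h t) sums (1 / (1 - t) * h t)"
      by (intro sums_mult2 geometric_sums) auto
    then show ?case
      by simp
  qed
  have summable_pointwise: "AE t in M. summable (\<lambda>k. norm (t ^ k * h t))"
    using AE_unit_interval h_bound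
    by eventually_elim (auto simp: abs_mult power_abs intro!: summable_mult2 summable_geometric)
  have "(\<lambda>t. h t / (1 - t)) \<in> borel_measurable M"
    by measurable
  from sums_integral_AE[OF term_int sums_pointwise summable_pointwise summable_int this]
  show "integrable M (\<lambda>t. h t / (1 - t))"
    and "(\<lambda>k. \<integral>t. t ^ k * h t \<partial>M) sums (\<integral>t. h t / (1 - t) \<partial>M)"
    by blast+
qed

lemma summable_norm_power_integral:
  fixes h :: "real \<Rightarrow> complex"
  assumes h_meas [measurable]: "h \<in> borel_measurable M"
    and h_bound: "AE t in M. norm (h t) \<le> B"
  shows "summable (\<lambda>k. norm (\<integral>t. of_real t ^ k * h t \<partial>M))"
    and "(\<Sum>k. norm (\<integral>t. of_real t ^ k * h t \<partial>M)) \<le> (\<integral>t. norm (h t) / (1 - t) \<partial>M)"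
proof -
  have norm_sums: "(\<lambda>k. \<integral>t. t ^ k * norm (h t) \<partial>M) sums (\<integral>t. norm (h t) / (1 - t) \<partial>M)"
    using h_bound by (intro power_integral_sums(2)) auto
  have term_le: "norm (\<integral>t. of_real t ^ k * h t \<partial>M) \<le> (\<integral>t. t ^ k * norm (h t) \<partial>M)" for k
  proof -
    have "norm (\<integral>t. of_real t ^ k * h t \<partial>M) \<le> (\<integral>t. norm (of_real t ^ k * h t) \<partial>M)"
      by (rule integral_norm_bound)
    also have "\<dots> = (\<integral>t. t ^ k * norm (h t) \<partial>M)"
      using AE_unit_interval by (intro integral_cong_AE) (auto simp: norm_mult norm_power)
    finally show ?thesis .
  qed
  show summable: "summable (\<lambda>k. norm (\<integral>t. of_real t ^ k * h t \<partial>M))"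
    using term_le by (intro summable_comparison_test'[OF sums_summable[OF norm_sums]]) simp
  show "(\<Sum>k. norm (\<integral>t. of_real t ^ k * h t \<partial>M)) \<le> (\<integral>t. norm (h t) / (1 - t) \<partial>M)"
    using suminf_le[OF term_le summable sums_summable[OF norm_sums]] sums_unique[OF norm_sums]
    by simp
qed

lemma integrable_inverse_one_minus: "integrable M (\<lambda>t. 1 / (1 - t))"
  using power_integral_sums(1)[of "\<lambda>_. 1" 1] by simp

lemma moment_series_sums:
  fixes a :: "nat \<Rightarrow> complex"
  assumes a_bound: "\<And>n. norm (a n) \<le> C"
  shows "(\<lambda>n. of_real (moment M (n + k)) * a n)
           sums (\<integral>t. of_real t ^ k * (\<Sum>n. a n * of_real t ^ n) \<partial>M)"
proof -
  define g where "g n t = a n * of_real (t ^ (n + k))" for n t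
  have g_int: "integrable M (g n)" for n
    unfolding g_def by (intro integrable_mult_right integrable_of_real integrable_power)
  have g_integral: "(\<integral>t. g n t \<partial>M) = of_real (moment M (n + k)) * a n" for n
    unfolding g_def moment_def integral_mult_right_zero integral_complex_of_real by (rule mult.commute)
  have norm_g_integral: "(\<integral>t. norm (g n t) \<partial>M) = norm (a n) * moment M (n + k)" for n
  proof -
    have "(\<integral>t. norm (g n t) \<partial>M) = (\<integral>t. norm (a n) * t ^ (n + k) \<partial>M)"
    proof (rule integral_cong_AE)
      show "AE t in M. norm (g n t) = norm (a n) * t ^ (n + k)"
        using AE_unit_interval by eventually_elim (simp add: g_def norm_mult norm_power)
    qed (auto simp: g_def)
    then show ?thesis
      by (simp add: moment_def)
  qed
  have integral_summable: "summable (\<lambda>n. \<integral>t. norm (g n t) \<partial>M)"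
  proof (rule summable_comparison_test')
    show "summable (\<lambda>n. C * moment M (n + k))"
      by (intro summable_mult summable_ignore_initial_segment summable_moment)
    show "norm (\<integral>t. norm (g n t) \<partial>M) \<le> C * moment M (n + k)" for n
      using mult_right_mono[OF a_bound moment_nonneg] by (simp add: norm_g_integral moment_nonneg)
  qed
  have pointwise: "AE t in M. (\<lambda>n. g n t) sums (of_real t ^ k * (\<Sum>n. a n * of_real t ^ n))
      \<and> summable (\<lambda>n. norm (g n t))"
    using AE_unit_interval
  proof eventually_elim
    case (elim t)
    have "summable (\<lambda>n. norm (a n * of_real t ^ n))"
      using elim by (intro summable_norm_bounded_coeff_power[OF a_bound]) simp
    then have "summable (\<lambda>n. norm (of_real t ^ k * (a n * of_real t ^ n)))"
      unfolding norm_mult[of "of_real t ^ k"] by (rule summable_mult)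
    moreover have "(\<lambda>n. of_real t ^ k * (a n * of_real t ^ n))
                     sums (of_real t ^ k * (\<Sum>n. a n * of_real t ^ n))"
      using \<open>summable (\<lambda>n. norm (a n * of_real t ^ n))\<close>
      by (intro sums_mult summable_sums) (rule summable_norm_cancel)
    moreover have "g n t = of_real t ^ k * (a n * of_real t ^ n)" for n
      by (simp add: g_def power_add mult_ac)
    ultimately show ?case
      by simp
  qed
  have "(\<lambda>t. of_real t ^ k * (\<Sum>n. a n * of_real t ^ n)) \<in> borel_measurable M"
    by measurable
  from sums_integral_AE(2)[OF g_int pointwise[unfolded eventually_conj_iff, THEN conjunct1]
      pointwise[unfolded eventually_conj_iff, THEN conjunct2] integral_summable this]
  show ?thesis
    by (simp add: g_integral)
qed

lemma radial_restriction_measurable: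
  assumes "f \<in> Hinf"
  shows "radial_restriction f \<in> borel_measurable M"
  using assms by (auto simp: borel_measurable_M_iff Hinf_def intro: borel_measurable_radial_restriction)

lemma integrable_power_mult_radial_restriction:
  assumes "f \<in> Hinf"
  shows "integrable M (\<lambda>t. of_real t ^ k * radial_restriction f t)"
proof -
  obtain C where bound: "\<And>z. z \<in> ball 0 1 \<Longrightarrow> norm (f z) \<le> C"
    using assms unfolding Hinf_def by blast
  note [measurable] = radial_restriction_measurable[OF assms]
  show ?thesis
  proof (rule integrable_const_bound[where B = C])
    show "AE t in M. norm (of_real t ^ k * radial_restriction f t) \<le> C"
      using AE_unit_interval
    proof eventually_elim
      case (elim t)
      then have "\<bar>t\<bar> ^ k * norm (radial_restriction f t) \<le> 1 * C"
        using norm_radial_restriction_le[of f, OF bound]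
        by (intro mult_mono) (auto simp: power_le_one)
      then show ?case
        by (simp add: norm_mult norm_power)
    qed
  qed measurable
qed

lemma Hmu_series_sums:
  assumes "f \<in> Hinf"
  shows "(\<lambda>n. of_real (moment M (n + k)) * taylor_coeff f n)
           sums (\<integral>t. of_real t ^ k * radial_restriction f t \<partial>M)"
proof -
  obtain C where hol: "f holomorphic_on ball 0 1" and bound: "\<And>z. z \<in> ball 0 1 \<Longrightarrow> norm (f z) \<le> C"
    using assms unfolding Hinf_def by blast
  note [measurable] = radial_restriction_measurable[OF assms]
  have "(\<lambda>n. of_real (moment M (n + k)) * taylor_coeff f n)
          sums (\<integral>t. of_real t ^ k * (\<Sum>n. taylor_coeff f n * of_real t ^ n) \<partial>M)"
    using norm_taylor_coeff_le[OF hol bound] by (rule moment_series_sums)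
  also have "(\<integral>t. of_real t ^ k * (\<Sum>n. taylor_coeff f n * of_real t ^ n) \<partial>M)
           = (\<integral>t. of_real t ^ k * radial_restriction f t \<partial>M)"
  proof (rule integral_cong_AE)
    show "AE t in M. of_real t ^ k * (\<Sum>n. taylor_coeff f n * of_real t ^ n)
                     = of_real t ^ k * radial_restriction f t"
      using AE_unit_interval
    proof eventually_elim
      case (elim t)
      then have "(\<lambda>n. taylor_coeff f n * of_real t ^ n) sums f (of_real t)"
        using holomorphic_power_series[OF hol, of "of_real t"] by (simp add: taylor_coeff_def)
      with elim show ?case
        by (simp add: radial_restriction_def sums_iff)
    qed
  qed measurable
  finally show ?thesis .
qed

lemma Hmu_eq_integral:
  assumes "f \<in> Hinf"
  shows "Hmu M f k = (\<integral>t. of_real t ^ k * radial_restriction f t \<partial>M)"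
  unfolding Hmu_def using Hmu_series_sums[OF assms] by (rule sums_unique[symmetric])

lemma summable_moment_mult_taylor_coeff:
  assumes "f \<in> Hinf"
  shows "summable (\<lambda>n. of_real (moment M (n + k)) * taylor_coeff f n)"
  using Hmu_series_sums[OF assms] by (rule sums_summable)

lemma summable_norm_Hmu:
  assumes "f \<in> Hinf"
  shows "summable (\<lambda>k. norm (Hmu M f k))"
proof -
  obtain C where bound: "\<And>z. z \<in> ball 0 1 \<Longrightarrow> norm (f z) \<le> C"
    using assms unfolding Hinf_def by blast
  show ?thesis
    unfolding Hmu_eq_integral[OF assms]
    using norm_radial_restriction_le[of f, OF bound]
    by (intro summable_norm_power_integral(1)[OF radial_restriction_measurable[OF assms], of C])
       (rule always_eventually, blast)
qed

lemma Hmu_linear: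
  assumes "f \<in> Hinf" and "g \<in> Hinf"
  shows "Hmu M (\<lambda>z. a * f z + b * g z) = (\<lambda>k. a * Hmu M f k + b * Hmu M g k)"
proof
  fix k
  have "radial_restriction (\<lambda>z. a * f z + b * g z) t
          = a * radial_restriction f t + b * radial_restriction g t" for t
    by (simp add: radial_restriction_def indicator_def)
  then show "Hmu M (\<lambda>z. a * f z + b * g z) k = a * Hmu M f k + b * Hmu M g k"
    using integrable_power_mult_radial_restriction[OF assms(1), of k]
      integrable_power_mult_radial_restriction[OF assms(2), of k]
    by (simp add: Hmu_eq_integral assms Hinf_linear_combination algebra_simps)
qed

lemma wiener_norm_Hmu_le:
  assumes "f \<in> Hinf"
  shows "wiener_norm (Hmu M f) \<le> (\<integral>t. norm (radial_restriction f t) / (1 - t) \<partial>M)"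
proof -
  obtain C where bound: "\<And>z. z \<in> ball 0 1 \<Longrightarrow> norm (f z) \<le> C"
    using assms unfolding Hinf_def by blast
  show ?thesis
    unfolding wiener_norm_def Hmu_eq_integral[OF assms]
    using norm_radial_restriction_le[of f, OF bound]
    by (intro summable_norm_power_integral(2)[OF radial_restriction_measurable[OF assms], of C])
       (rule always_eventually, blast)
qed

lemma Hmu_diff:
  assumes "f \<in> Hinf" and "g \<in> Hinf"
  shows "(\<lambda>k. Hmu M f k - Hmu M g k) = Hmu M (\<lambda>z. f z - g z)"
  using Hmu_linear[OF assms, of 1 "-1"] by simp

lemma wiener_norm_Hmu_tendsto_zero:
  assumes d_Hinf: "\<And>j. d j \<in> Hinf"
    and bound: "\<And>j z. z \<in> ball 0 1 \<Longrightarrow> norm (d j z) \<le> B"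
    and lim: "\<And>z. z \<in> ball 0 1 \<Longrightarrow> (\<lambda>j. d j z) \<longlonglongrightarrow> 0"
  shows "(\<lambda>j. wiener_norm (Hmu M (d j))) \<longlonglongrightarrow> 0"
proof -
  have d_bound: "norm (radial_restriction (d j) t) \<le> B" for j t
    using bound by (rule norm_radial_restriction_le)
  note [measurable] = radial_restriction_measurable[OF d_Hinf]
  have "(\<lambda>j. \<integral>t. norm (radial_restriction (d j) t) / (1 - t) \<partial>M) \<longlonglongrightarrow> (\<integral>t. 0 \<partial>M)"
  proof (rule integral_dominated_convergence[where w = "\<lambda>t. B * (1 / (1 - t))"])
    show "integrable M (\<lambda>t. B * (1 / (1 - t)))"
      by (rule integrable_mult_right[OF integrable_inverse_one_minus])
    show "AE t in M. (\<lambda>j. norm (radial_restriction (d j) t) / (1 - t)) \<longlonglongrightarrow> 0"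
      using AE_unit_interval
    proof eventually_elim
      case (elim t)
      then have "(\<lambda>j. d j (of_real t)) \<longlonglongrightarrow> 0"
        using lim[of "of_real t"] by simp
      with elim show ?case
        by (auto simp: radial_restriction_def intro!: tendsto_divide_zero tendsto_norm_zero)
    qed
    show "AE t in M. norm (norm (radial_restriction (d j) t) / (1 - t)) \<le> B * (1 / (1 - t))" for j
      using AE_unit_interval
      by eventually_elim (use d_bound in \<open>auto intro!: divide_right_mono\<close>)
  qed measurable
  then have integral_tendsto: "(\<lambda>j. \<integral>t. norm (radial_restriction (d j) t) / (1 - t) \<partial>M) \<longlonglongrightarrow> 0"
    by simp
  show ?thesis
  proof (rule Lim_null_comparison[OF always_eventually integral_tendsto], rule allI)
    fix j
    have "0 \<le> wiener_norm (Hmu M (d j))"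
      unfolding wiener_norm_def using summable_norm_Hmu[OF d_Hinf] by (rule suminf_nonneg) simp
    then show "norm (wiener_norm (Hmu M (d j)))
                 \<le> (\<integral>t. norm (radial_restriction (d j) t) / (1 - t) \<partial>M)"
      using wiener_norm_Hmu_le[OF d_Hinf] by simp
  qed
qed

lemma wiener_norm_Hmu_diff_tendsto_zero:
  assumes F: "\<And>j. F j \<in> Hinf_ball" and g: "g \<in> Hinf_ball"
    and lim: "\<And>z. z \<in> ball 0 1 \<Longrightarrow> (\<lambda>j. F j z) \<longlonglongrightarrow> g z"
  shows "(\<lambda>j. wiener_norm (\<lambda>k. Hmu M (F j) k - Hmu M g k)) \<longlonglongrightarrow> 0"
proof -
  have Hinf: "F j \<in> Hinf" "g \<in> Hinf" for j
    using F g Hinf_ball_subset_Hinf by auto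
  have "norm (F j z - g z) \<le> 2" if "z \<in> ball 0 1" for j z
  proof -
    have "norm (F j z) \<le> 1" and "norm (g z) \<le> 1"
      using F[of j] g that by (auto simp: Hinf_ball_def)
    then show ?thesis
      using norm_triangle_ineq4[of "F j z" "g z"] by simp
  qed
  moreover have "(\<lambda>j. F j z - g z) \<longlonglongrightarrow> 0" if "z \<in> ball 0 1" for z
    using lim[OF that] by (simp add: LIM_zero)
  ultimately have "(\<lambda>j. wiener_norm (Hmu M (\<lambda>z. F j z - g z))) \<longlonglongrightarrow> 0"
    using Hinf by (intro wiener_norm_Hmu_tendsto_zero Hinf_linear_combination[of _ _ 1 "-1", simplified])
  then show ?thesis
    by (simp add: Hmu_diff Hinf)
qed

end

theorem proposition30:
  fixes M :: "real measure" and p :: real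
  assumes "sets M = sets borel"
    and "finite_measure M"
    and "emeasure M (UNIV - {0..<1}) = 0"
    and "summable (\<lambda>n. moment M n)"
    and "1 \<le> p"
    and "\<forall>k. summable (\<lambda>n. \<bar>moment M (n + k)\<bar> powr p)"
    and "summable (\<lambda>k. (\<Sum>n. \<bar>moment M (n + k)\<bar> powr p) powr (1 / p))"
  shows
    "(\<forall>f\<in>Hinf. (\<forall>k. summable (\<lambda>n. complex_of_real (moment M (n + k)) * taylor_coeff f n))
                 \<and> summable (\<lambda>k. norm (Hmu M f k)))
     \<and> (\<forall>f\<in>Hinf. \<forall>g\<in>Hinf. \<forall>a b :: complex.
           Hmu M (\<lambda>z. a * f z + b * g z) = (\<lambda>k. a * Hmu M f k + b * Hmu M g k))
     \<and> (\<forall>F :: nat \<Rightarrow> complex \<Rightarrow> complex. (\<forall>j. F j \<in> Hinf_ball) \<longrightarrow>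
           (\<exists>r c. strict_mono r \<and> summable (\<lambda>k. norm (c k)) \<and>
              (\<lambda>j. wiener_norm (\<lambda>k. Hmu M (F (r j)) k - c k)) \<longlonglongrightarrow> 0))"
proof -
  interpret unit_interval_measure M
    using assms(1-4) by (intro unit_interval_measure.intro unit_interval_measure_axioms.intro) auto
  have "\<exists>r c. strict_mono r \<and> summable (\<lambda>k. norm (c k)) \<and>
          (\<lambda>j. wiener_norm (\<lambda>k. Hmu M (F (r j)) k - c k)) \<longlonglongrightarrow> 0"
    if F_ball: "\<forall>j. F j \<in> Hinf_ball" for F :: "nat \<Rightarrow> complex \<Rightarrow> complex"
  proof -
    obtain g r where g: "g \<in> Hinf_ball" and r: "strict_mono r"
      and lim: "\<And>z. z \<in> ball 0 1 \<Longrightarrow> (\<lambda>j. F (r j) z) \<longlonglongrightarrow> g z"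
      using Hinf_ball_pointwise_convergent_subseq[of F] F_ball by blast
    have "(\<lambda>j. wiener_norm (\<lambda>k. Hmu M (F (r j)) k - Hmu M g k)) \<longlonglongrightarrow> 0"
      using F_ball g lim by (intro wiener_norm_Hmu_diff_tendsto_zero) auto
    moreover have "summable (\<lambda>k. norm (Hmu M g k))"
      using g Hinf_ball_subset_Hinf by (intro summable_norm_Hmu) auto
    ultimately show ?thesis
      using r by blast
  qed
  then show ?thesis
    by (auto simp: summable_moment_mult_taylor_coeff summable_norm_Hmu Hmu_linear)
qed

end
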